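(* Let $\mathbf P=(P,\leq,{}',0,1)$ be a finite pseudo-orthomodular poset, and put $M(x,y)=L(U(x,y'),y)$ and $R(x,y)=L(U(L(x,y),x'))$. Then the Dedekind-MacNeille completion $\mathrm{DM}(\mathbf P)$ is a complete orthomodular lattice. Moreover, $\mathrm{DM}(\mathbf P)$ is a left residuated lattice with respect to the operations $x\odot y=(x\vee y')\wedge y$ and $x\to y=(x\wedge y)\vee x'$ obtained from $M$ and $R$ by the DM-transformation.
   Context: For $M\subseteq P$, $U(M)$, $L(M)$ are the sets of upper and lower bounds; $U(a,b)=U(\{a,b\})$, $L(a,b)=L(\{a,b\})$. A poset with complementation is a bounded poset with antitone involution $'$ ($x\le y\Rightarrow y'\le x'$, $x''=x$) with $L(x,x')=\{0\}$, $U(x,x')=\{1\}$; it is pseudo-orthomodular if $L(U(L(x,y),y'),y)=L(x,y)$ for all $x,y$. The Dedekind-MacNeille completion $\mathrm{DM}(\mathbf P)$ is the complete lattice of subsets $B\subseteq P$ with $L(U(B))=B$ under inclusion, $P$ embedded via $x\mapsto L(\{x\})$, with antitone involution $X'=L(\{u'\mid u\in X\})$. The DM-transformation replaces $U(x,y)$ or $LU(x,y)$ by $x\vee y$ and $L(x,y)$ by $x\wedge y$. A lattice with complementation is orthomodular if $x\vee y=((x\vee y)\wedge y')\vee y$. A lattice with top $1$ is left residuated with respect to binary operations $\odot,\to$ if $x\odot 1=x=1\odot x$ and $x\odot y\le z\iff x\le y\to z$ for all $x,y,z$. *)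

theory Defs
  imports Main "HOL-Algebra.Complete_Lattice"
begin

text \<open>Posets are modelled by a finite type with a bounded partial order
  (class order_bot / order_top); 0 is Orderings.bot and 1 is Orderings.top.\<close>

definition Ub :: "'a::order set \<Rightarrow> 'a set" where
  "Ub M = {x. \<forall>m\<in>M. m \<le> x}"

definition Lb :: "'a::order set \<Rightarrow> 'a set" where
  "Lb M = {x. \<forall>m\<in>M. x \<le> m}"

definition poset_with_complementation :: "('a::{order_bot,order_top} \<Rightarrow> 'a) \<Rightarrow> bool" where
  "poset_with_complementation c \<longleftrightarrow>
     (\<forall>x y. x \<le> y \<longrightarrow> c y \<le> c x) \<and> (\<forall>x. c (c x) = x) \<and>
     (\<forall>x. Lb {x, c x} = {Orderings.bot}) \<and> (\<forall>x. Ub {x, c x} = {Orderings.top})"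

definition pseudo_orthomodular :: "('a::order \<Rightarrow> 'a) \<Rightarrow> bool" where
  "pseudo_orthomodular c \<longleftrightarrow>
     (\<forall>x y. Lb (Ub (Lb {x, y} \<union> {c y}) \<union> {y}) = Lb {x, y})"

definition DM_set :: "'a::order set set" where
  "DM_set = {B. Lb (Ub B) = B}"

definition DM :: "'a::order set gorder" where
  "DM = \<lparr>carrier = DM_set, eq = (=), le = (\<subseteq>)\<rparr>"

definition DM_comp :: "('a::order \<Rightarrow> 'a) \<Rightarrow> 'a set \<Rightarrow> 'a set" where
  "DM_comp c X = Lb (c ` X)"

definition lattice_with_complementation :: "('a, 'b) gorder_scheme \<Rightarrow> ('a \<Rightarrow> 'a) \<Rightarrow> bool" where
  "lattice_with_complementation L n \<longleftrightarrow>
     bounded_lattice L \<and>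
     (\<forall>x\<in>carrier L. n x \<in> carrier L \<and> n (n x) = x \<and>
        x \<sqinter>\<^bsub>L\<^esub> n x = \<bottom>\<^bsub>L\<^esub> \<and> x \<squnion>\<^bsub>L\<^esub> n x = \<top>\<^bsub>L\<^esub>) \<and>
     (\<forall>x\<in>carrier L. \<forall>y\<in>carrier L. x \<sqsubseteq>\<^bsub>L\<^esub> y \<longrightarrow> n y \<sqsubseteq>\<^bsub>L\<^esub> n x)"

definition orthomodular_lattice :: "('a, 'b) gorder_scheme \<Rightarrow> ('a \<Rightarrow> 'a) \<Rightarrow> bool" where
  "orthomodular_lattice L n \<longleftrightarrow>
     lattice_with_complementation L n \<and>
     (\<forall>x\<in>carrier L. \<forall>y\<in>carrier L.
        x \<squnion>\<^bsub>L\<^esub> y = ((x \<squnion>\<^bsub>L\<^esub> y) \<sqinter>\<^bsub>L\<^esub> n y) \<squnion>\<^bsub>L\<^esub> y)"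

definition left_residuated :: "('a, 'b) gorder_scheme \<Rightarrow> ('a \<Rightarrow> 'a \<Rightarrow> 'a) \<Rightarrow> ('a \<Rightarrow> 'a \<Rightarrow> 'a) \<Rightarrow> bool" where
  "left_residuated L m i \<longleftrightarrow>
     lattice L \<and>
     (\<forall>x\<in>carrier L. \<forall>y\<in>carrier L. m x y \<in> carrier L \<and> i x y \<in> carrier L) \<and>
     (\<forall>x\<in>carrier L. m x \<top>\<^bsub>L\<^esub> = x \<and> m \<top>\<^bsub>L\<^esub> x = x) \<and>
     (\<forall>x\<in>carrier L. \<forall>y\<in>carrier L. \<forall>z\<in>carrier L.
        m x y \<sqsubseteq>\<^bsub>L\<^esub> z \<longleftrightarrow> x \<sqsubseteq>\<^bsub>L\<^esub> i y z)"

definition DM_odot :: "('a::order \<Rightarrow> 'a) \<Rightarrow> 'a set \<Rightarrow> 'a set \<Rightarrow> 'a set" where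
  "DM_odot c X Y = (X \<squnion>\<^bsub>DM\<^esub> DM_comp c Y) \<sqinter>\<^bsub>DM\<^esub> Y"

definition DM_arrow :: "('a::order \<Rightarrow> 'a) \<Rightarrow> 'a set \<Rightarrow> 'a set \<Rightarrow> 'a set" where
  "DM_arrow c X Y = (X \<sqinter>\<^bsub>DM\<^esub> Y) \<squnion>\<^bsub>DM\<^esub> DM_comp c X"

end

(* The complementation of P induces an antitone involution X' = L(c X) on DM(P) with
   X /\ X' = 0, so DM(P) is an ortholattice. Call x orthomodular if b = (b /\ x') \/ x for
   all b >= x. If a <= x and both a and x /\ a' are orthomodular, then so is x; as
   x /\ a' < x whenever 0 < a < x, induction over the finite lattice reduces orthomodularity
   to the atoms. These are the principal ideals L(p) = L(c p)', and L(c p)' is orthomodular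
   iff y = (y \/ L(c p)) /\ L(p) for all y <= L(p). For y = L(u, p) this equation is
   pseudo-orthomodularity, and it passes to arbitrary y because y is the meet of the
   principal ideals above it. Residuation (x \/ y') /\ y <= z <-> x <= (y /\ z) \/ y' then
   follows from orthomodularity at y' and its dual form at y. *)

theory Submission imports Defs begin

lemma Lb_antimono: "A \<subseteq> B \<Longrightarrow> Lb B \<subseteq> Lb A"
  by (auto simp: Lb_def)

lemma Ub_antimono: "A \<subseteq> B \<Longrightarrow> Ub B \<subseteq> Ub A"
  by (auto simp: Ub_def)

lemma subset_Lb_Ub: "A \<subseteq> Lb (Ub A)"
  by (auto simp: Lb_def Ub_def)

lemma subset_Ub_Lb: "A \<subseteq> Ub (Lb A)"
  by (auto simp: Lb_def Ub_def)

lemma Lb_in_DM_set: "Lb A \<in> DM_set"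
  unfolding DM_set_def using Lb_antimono[OF subset_Ub_Lb[of A]] subset_Lb_Ub[of "Lb A"] by blast

lemma UNIV_in_DM_set: "UNIV \<in> DM_set"
  using Lb_in_DM_set[of "{}"] by (simp add: Lb_def)

lemma Lb_Ub_least:
  assumes "X \<in> DM_set" and "A \<subseteq> X"
  shows "Lb (Ub A) \<subseteq> X"
proof -
  have "Lb (Ub A) \<subseteq> Lb (Ub X)"
    using assms(2) by (intro Lb_antimono Ub_antimono)
  with assms(1) show ?thesis
    by (simp add: DM_set_def)
qed

lemma Inter_in_DM_set: "F \<subseteq> DM_set \<Longrightarrow> \<Inter>F \<in> DM_set"
proof -
  assume "F \<subseteq> DM_set"
  then have "Lb (Ub (\<Inter>F)) \<subseteq> X" if "X \<in> F" for X
    using that by (intro Lb_Ub_least) auto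
  then show ?thesis
    unfolding DM_set_def using subset_Lb_Ub[of "\<Inter>F"] by blast
qed

lemma mem_DM_set_iff:
  assumes "X \<in> DM_set"
  shows "p \<in> X \<longleftrightarrow> (\<forall>u\<in>Ub X. p \<le> u)"
proof -
  have "p \<in> X \<longleftrightarrow> p \<in> Lb (Ub X)"
    using assms by (simp add: DM_set_def)
  then show ?thesis
    by (simp add: Lb_def)
qed

lemma Lb_UNIV: "Lb (UNIV :: 'a::order_bot set) = {bot}"
  by (auto simp: Lb_def intro: order.antisym)

lemma bot_in_DM_set: "X \<in> DM_set \<Longrightarrow> (bot :: 'a::order_bot) \<in> X"
  by (simp add: mem_DM_set_iff[of X])

(* DM(P) as a type, so that the ortholattice argument can use the lattice classes of HOL;
   the results are transferred to the structure DM at the end. *)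
typedef (overloaded) ('a::order) dm = "DM_set :: 'a set set"
  using UNIV_in_DM_set by blast

instantiation dm :: (order) bounded_lattice
begin

definition "less_eq_dm x y \<longleftrightarrow> Rep_dm x \<subseteq> Rep_dm y"
definition "less_dm x y \<longleftrightarrow> Rep_dm x \<subset> Rep_dm y"
definition "inf_dm x y = Abs_dm (Rep_dm x \<inter> Rep_dm y)"
definition "sup_dm x y = Abs_dm (Lb (Ub (Rep_dm x \<union> Rep_dm y)))"
definition "bot_dm = Abs_dm (Lb UNIV)"
definition "top_dm = Abs_dm UNIV"

lemma Rep_dm_inf: "Rep_dm (inf x y) = Rep_dm x \<inter> Rep_dm y"
  using Inter_in_DM_set[of "{Rep_dm x, Rep_dm y}"] Rep_dm[of x] Rep_dm[of y]
  by (simp add: inf_dm_def Abs_dm_inverse)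

lemma Rep_dm_sup: "Rep_dm (sup x y) = Lb (Ub (Rep_dm x \<union> Rep_dm y))"
  by (simp add: sup_dm_def Abs_dm_inverse Lb_in_DM_set)

lemma Rep_dm_bot: "Rep_dm bot = Lb UNIV"
  by (simp add: bot_dm_def Abs_dm_inverse Lb_in_DM_set)

lemma Rep_dm_top: "Rep_dm Orderings.top = UNIV"
  by (simp add: top_dm_def Abs_dm_inverse UNIV_in_DM_set)

instance
proof
  fix x y z :: "'a dm"
  show "x < y \<longleftrightarrow> x \<le> y \<and> \<not> y \<le> x" "x \<le> x" "x \<le> y \<Longrightarrow> y \<le> z \<Longrightarrow> x \<le> z"
    by (auto simp: less_eq_dm_def less_dm_def)
  show "x \<le> y \<Longrightarrow> y \<le> x \<Longrightarrow> x = y"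
    by (simp add: less_eq_dm_def Rep_dm_inject)
  show "inf x y \<le> x" "inf x y \<le> y" "x \<le> y \<Longrightarrow> x \<le> z \<Longrightarrow> x \<le> inf y z"
    by (auto simp: less_eq_dm_def Rep_dm_inf)
  show "x \<le> sup x y" "y \<le> sup x y"
    using subset_Lb_Ub[of "Rep_dm x \<union> Rep_dm y"] by (auto simp: less_eq_dm_def Rep_dm_sup)
  show "y \<le> x \<Longrightarrow> z \<le> x \<Longrightarrow> sup y z \<le> x"
    using Rep_dm[of x] by (simp add: less_eq_dm_def Rep_dm_sup Lb_Ub_least)
  show "bot \<le> x"
    using Lb_Ub_least[OF Rep_dm[of x], of "{}"] by (simp add: less_eq_dm_def Rep_dm_bot Ub_def)
  show "x \<le> Orderings.top"
    by (simp add: less_eq_dm_def Rep_dm_top)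
qed

end

definition atom :: "'a::order_bot \<Rightarrow> bool" where
  "atom a \<longleftrightarrow> bot < a \<and> (\<nexists>y. bot < y \<and> y < a)"

locale ortholattice =
  fixes orth :: "'b::bounded_lattice \<Rightarrow> 'b"
  assumes orth_orth [simp]: "orth (orth x) = x"
    and orth_antimono: "x \<le> y \<Longrightarrow> orth y \<le> orth x"
    and inf_orth [simp]: "inf x (orth x) = bot"
begin

lemma orth_le_orth_iff [simp]: "orth x \<le> orth y \<longleftrightarrow> y \<le> x"
  by (metis orth_antimono orth_orth)

lemma orth_sup [simp]: "orth (sup x y) = inf (orth x) (orth y)"
proof (rule order.antisym)
  show "orth (sup x y) \<le> inf (orth x) (orth y)"
    by (simp add: orth_antimono)
  have "sup x y \<le> orth (inf (orth x) (orth y))"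
    by (metis inf_le1 inf_le2 le_sup_iff orth_le_orth_iff orth_orth)
  then show "inf (orth x) (orth y) \<le> orth (sup x y)"
    by (metis orth_le_orth_iff orth_orth)
qed

lemma orth_inf [simp]: "orth (inf x y) = sup (orth x) (orth y)"
  by (metis orth_sup orth_orth)

lemma orth_bot [simp]: "orth bot = Orderings.top"
  by (metis bot_least orth_le_orth_iff orth_orth top.extremum_unique)

lemma orth_top [simp]: "orth Orderings.top = bot"
  by (metis orth_bot orth_orth)

lemma sup_orth [simp]: "sup x (orth x) = Orderings.top"
  by (metis inf_commute inf_orth orth_bot orth_inf orth_orth)

definition orthomodular_at :: "'b \<Rightarrow> bool" where
  "orthomodular_at x \<longleftrightarrow> (\<forall>b. x \<le> b \<longrightarrow> b = sup (inf b (orth x)) x)"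

lemma orthomodular_at_orth_iff:
  "orthomodular_at (orth y) \<longleftrightarrow> (\<forall>c. c \<le> y \<longrightarrow> c = inf (sup c (orth y)) y)"
proof -
  have "c = inf (sup c (orth y)) y \<longleftrightarrow> orth c = sup (inf (orth c) y) (orth y)" for c
    by (metis orth_inf orth_orth orth_sup)
  then show ?thesis
    unfolding orthomodular_at_def by (metis orth_le_orth_iff orth_orth)
qed

lemma orthomodular_at_bot: "orthomodular_at bot"
  by (simp add: orthomodular_at_def)

lemma orthomodular_at_decomposition:
  assumes "a \<le> x" and om_a: "orthomodular_at a" and om_y: "orthomodular_at (inf x (orth a))"
  shows "orthomodular_at x"
  unfolding orthomodular_at_def
proof (intro allI impI)
  fix b assume "x \<le> b"
  define y where "y = inf x (orth a)"
  have b_split: "b = sup (inf b (orth a)) a"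
    using om_a \<open>a \<le> x\<close> \<open>x \<le> b\<close> unfolding orthomodular_at_def by auto
  have x_split: "x = sup y a"
    using om_a \<open>a \<le> x\<close> unfolding orthomodular_at_def y_def by auto
  have "y \<le> inf b (orth a)"
    using \<open>x \<le> b\<close> by (simp add: y_def le_infI1)
  then have "inf b (orth a) = sup (inf (inf b (orth a)) (orth y)) y"
    using om_y unfolding orthomodular_at_def y_def by blast
  also have "inf (inf b (orth a)) (orth y) = inf b (orth x)"
    using arg_cong[OF x_split, of orth] by (simp add: ac_simps)
  finally have "b = sup (sup (inf b (orth x)) y) a"
    using b_split by simp
  then show "b = sup (inf b (orth x)) x"
    using x_split by (simp add: sup_assoc)
qed

lemma orthomodular_at_if_atoms:
  assumes "finite (UNIV :: 'b set)" and atoms: "\<And>a. atom a \<Longrightarrow> orthomodular_at a"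
  shows "orthomodular_at x"
proof (induction x rule: measure_induct_rule[where f = "\<lambda>x. card {y. y < x}"])
  case (less x)
  have IH: "orthomodular_at y" if "y < x" for y
  proof (rule less)
    have "{z. z < y} \<subset> {z. z < x}"
      using that by auto
    then show "card {z. z < y} < card {z. z < x}"
      using psubset_card_mono[OF finite_subset[OF subset_UNIV assms(1)]] by blast
  qed
  consider "x = bot" | "atom x" | a where "bot < a" "a < x"
    unfolding atom_def using bot.not_eq_extremum by blast
  then show ?case
  proof cases
    case 1
    then show ?thesis by (simp add: orthomodular_at_bot)
  next
    case 2
    then show ?thesis by (rule atoms)
  next
    case (3 a)
    have "inf x (orth a) \<noteq> x"
    proof
      assume "inf x (orth a) = x"
      then have "x \<le> orth a"
        by (metis inf.cobounded2)
      with \<open>a < x\<close> have "a \<le> orth a"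
        by simp
      then have "a = bot"
        using inf.absorb1[of a "orth a"] by simp
      with \<open>bot < a\<close> show False by simp
    qed
    then have "inf x (orth a) < x"
      using le_neq_trans[OF inf_le1] by blast
    then show ?thesis
      using orthomodular_at_decomposition[OF less_imp_le IH IH] \<open>a < x\<close> by blast
  qed
qed

lemma orthomodular_law:
  "orthomodular_at y \<Longrightarrow> sup x y = sup (inf (sup x y) (orth y)) y"
  by (simp add: orthomodular_at_def)

lemma residuation:
  assumes "orthomodular_at (orth y)"
  shows "inf (sup x (orth y)) y \<le> z \<longleftrightarrow> x \<le> sup (inf y z) (orth y)"
proof
  assume "inf (sup x (orth y)) y \<le> z"
  then have "sup (inf (sup x (orth y)) y) (orth y) \<le> sup (inf y z) (orth y)"
    by (simp add: le_supI1)
  also have "sup (inf (sup x (orth y)) y) (orth y) = sup x (orth y)"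
    using assms unfolding orthomodular_at_def by simp
  finally show "x \<le> sup (inf y z) (orth y)"
    by simp
next
  assume "x \<le> sup (inf y z) (orth y)"
  then have "inf (sup x (orth y)) y \<le> inf (sup (inf y z) (orth y)) y"
    by (simp add: le_infI1 le_supI1)
  also have "\<dots> = inf y z"
    using assms unfolding orthomodular_at_orth_iff by (metis inf_le1)
  finally show "inf (sup x (orth y)) y \<le> z"
    by simp
qed

end

lemma finite_UNIV_dm:
  assumes "finite (UNIV :: 'a::order set)"
  shows "finite (UNIV :: 'a dm set)"
proof -
  have "finite (range (Rep_dm :: 'a dm \<Rightarrow> 'a set))"
    using assms by (simp add: finite_subset[OF subset_UNIV] Finite_Set.finite_set)
  then show ?thesis
    by (rule finite_imageD) (simp add: inj_on_def Rep_dm_inject)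
qed

definition dm_principal :: "'a::order \<Rightarrow> 'a dm" where
  "dm_principal p = Abs_dm (Lb {p})"

lemma Rep_dm_principal: "Rep_dm (dm_principal p) = Lb {p}"
  by (simp add: dm_principal_def Abs_dm_inverse Lb_in_DM_set)

lemma dm_principal_le_iff: "dm_principal p \<le> x \<longleftrightarrow> p \<in> Rep_dm x"
proof
  show "dm_principal p \<le> x \<Longrightarrow> p \<in> Rep_dm x"
    by (auto simp: less_eq_dm_def Rep_dm_principal Lb_def)
  assume "p \<in> Rep_dm x"
  then have "q \<in> Rep_dm x" if "q \<le> p" for q
    using that mem_DM_set_iff[OF Rep_dm[of x]] by (meson order_trans)
  then show "dm_principal p \<le> x"
    by (auto simp: less_eq_dm_def Rep_dm_principal Lb_def)
qed

lemma le_dm_principal_iff: "x \<le> dm_principal u \<longleftrightarrow> u \<in> Ub (Rep_dm x)"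
  by (auto simp: less_eq_dm_def Rep_dm_principal Lb_def Ub_def)

lemma le_iff_le_dm_principal: "x \<le> y \<longleftrightarrow> (\<forall>u. y \<le> dm_principal u \<longrightarrow> x \<le> dm_principal u)"
proof (intro iffI allI impI)
  assume "\<forall>u. y \<le> dm_principal u \<longrightarrow> x \<le> dm_principal u"
  then have "Rep_dm x \<subseteq> Lb (Ub (Rep_dm y))"
    by (auto simp: le_dm_principal_iff Lb_def Ub_def)
  also have "\<dots> = Rep_dm y"
    using Rep_dm[of y] by (simp add: DM_set_def)
  finally show "x \<le> y"
    by (simp add: less_eq_dm_def)
qed auto

lemma atom_is_dm_principal:
  assumes "atom (a :: 'a::order_bot dm)"
  shows "\<exists>p. a = dm_principal p"
proof -
  have "Rep_dm a \<noteq> {bot}"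
    using assms Rep_dm_inject[of a bot] by (auto simp: atom_def Rep_dm_bot Lb_UNIV)
  then obtain p where "p \<in> Rep_dm a" "p \<noteq> bot"
    using bot_in_DM_set[OF Rep_dm[of a]] by blast
  then have "dm_principal p \<le> a" and "\<not> dm_principal p \<le> bot"
    by (simp_all add: dm_principal_le_iff Rep_dm_bot Lb_UNIV)
  then have "\<not> dm_principal p < a"
    using assms by (auto simp: atom_def less_le_not_le)
  with \<open>dm_principal p \<le> a\<close> show ?thesis
    by (auto simp: order.strict_iff_order)
qed

lemma Rep_dm_inf_dm_principal: "Rep_dm (inf (dm_principal u) (dm_principal v)) = Lb {u, v}"
  by (auto simp: Rep_dm_inf Rep_dm_principal Lb_def)

definition dm_orth :: "('a::order \<Rightarrow> 'a) \<Rightarrow> 'a dm \<Rightarrow> 'a dm" where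
  "dm_orth c x = Abs_dm (Lb (c ` Rep_dm x))"

lemma Rep_dm_orth: "Rep_dm (dm_orth c x) = Lb (c ` Rep_dm x)"
  by (simp add: dm_orth_def Abs_dm_inverse Lb_in_DM_set)

context
  fixes c :: "'a::{order_bot,order_top} \<Rightarrow> 'a"
  assumes compl: "poset_with_complementation c"
begin

lemma compl_antimono: "x \<le> y \<Longrightarrow> c y \<le> c x"
  using compl by (simp add: poset_with_complementation_def)

lemma compl_compl [simp]: "c (c x) = x"
  using compl by (simp add: poset_with_complementation_def)

lemma compl_le_compl_iff [simp]: "c x \<le> c y \<longleftrightarrow> y \<le> x"
  by (metis compl_antimono compl_compl)

lemma Lb_compl: "Lb {x, c x} = {bot}"
  using compl by (simp add: poset_with_complementation_def)

lemma image_compl_Lb_image_compl: "c ` Lb (c ` X) = Ub X"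
proof -
  have "c ` Lb (c ` X) = {q. c q \<in> Lb (c ` X)}"
  proof (intro equalityI subsetI)
    fix q
    assume "q \<in> {q. c q \<in> Lb (c ` X)}"
    then show "q \<in> c ` Lb (c ` X)"
      using image_eqI[of q c "c q"] by simp
  qed auto
  also have "\<dots> = Ub X"
    by (auto simp: Lb_def Ub_def)
  finally show ?thesis .
qed

interpretation dm: ortholattice "dm_orth c"
proof
  fix x y :: "'a dm"
  have "Rep_dm (dm_orth c (dm_orth c x)) = Lb (Ub (Rep_dm x))"
    by (simp add: Rep_dm_orth image_compl_Lb_image_compl)
  also have "\<dots> = Rep_dm x"
    using Rep_dm[of x] by (simp add: DM_set_def)
  finally show "dm_orth c (dm_orth c x) = x"
    by (simp add: Rep_dm_inject)
  show "x \<le> y \<Longrightarrow> dm_orth c y \<le> dm_orth c x"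
    by (simp add: less_eq_dm_def Rep_dm_orth Lb_antimono image_mono)
  have "Rep_dm x \<inter> Lb (c ` Rep_dm x) = {bot}"
  proof
    show "Rep_dm x \<inter> Lb (c ` Rep_dm x) \<subseteq> {bot}"
      using Lb_compl by (auto simp: Lb_def)
    show "{bot} \<subseteq> Rep_dm x \<inter> Lb (c ` Rep_dm x)"
      using bot_in_DM_set[OF Rep_dm[of x]] by (auto simp: Lb_def)
  qed
  then have "Rep_dm (inf x (dm_orth c x)) = Rep_dm bot"
    by (simp add: Rep_dm_inf Rep_dm_orth Rep_dm_bot Lb_UNIV)
  then show "inf x (dm_orth c x) = bot"
    by (simp add: Rep_dm_inject)
qed

lemma ortholattice_dm_orth: "ortholattice (dm_orth c)"
  by (rule dm.ortholattice_axioms)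

lemma dm_orth_dm_principal: "dm_orth c (dm_principal p) = dm_principal (c p)"
proof -
  have "Lb (c ` Lb {p}) = Lb {c p}"
    by (auto simp: Lb_def intro: order_trans compl_antimono)
  then show ?thesis
    by (simp add: Rep_dm_inject[symmetric] Rep_dm_orth Rep_dm_principal)
qed

lemma pseudo_orthomodular_dm_principal:
  assumes "pseudo_orthomodular c"
  shows "inf (sup (inf (dm_principal u) (dm_principal r)) (dm_principal (c r))) (dm_principal r)
    = inf (dm_principal u) (dm_principal r)"
proof -
  have "Rep_dm (inf (sup (inf (dm_principal u) (dm_principal r)) (dm_principal (c r))) (dm_principal r))
      = Lb (Ub (Lb {u, r} \<union> Lb {c r})) \<inter> Lb {r}"
    by (simp only: Rep_dm_inf Rep_dm_sup Rep_dm_principal flip: Rep_dm_inf_dm_principal)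
  also have "Ub (Lb {u, r} \<union> Lb {c r}) = Ub (Lb {u, r} \<union> {c r})"
    by (auto simp: Ub_def Lb_def intro: order_trans)
  also have "Lb (Ub (Lb {u, r} \<union> {c r})) \<inter> Lb {r} = Lb (Ub (Lb {u, r} \<union> {c r}) \<union> {r})"
    by (auto simp: Lb_def)
  also have "\<dots> = Lb {u, r}"
    using assms by (simp add: pseudo_orthomodular_def)
  finally show ?thesis
    by (simp add: Rep_dm_inject[symmetric] Rep_dm_inf_dm_principal)
qed

lemma orthomodular_at_dm_principal:
  assumes "pseudo_orthomodular c"
  shows "dm.orthomodular_at (dm_principal p)"
proof -
  have below: "x = inf (sup x (dm_principal (c r))) (dm_principal r)" if "x \<le> dm_principal r" for x r
  proof (rule order.antisym)
    show "x \<le> inf (sup x (dm_principal (c r))) (dm_principal r)"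
      using that by simp
    show "inf (sup x (dm_principal (c r))) (dm_principal r) \<le> x"
      unfolding le_iff_le_dm_principal[of _ x]
    proof (intro allI impI)
      fix u
      assume "x \<le> dm_principal u"
      with that have "x \<le> inf (dm_principal u) (dm_principal r)"
        by simp
      then have "inf (sup x (dm_principal (c r))) (dm_principal r)
          \<le> inf (sup (inf (dm_principal u) (dm_principal r)) (dm_principal (c r))) (dm_principal r)"
        by (intro inf_mono sup_mono) auto
      also have "\<dots> = inf (dm_principal u) (dm_principal r)"
        by (rule pseudo_orthomodular_dm_principal[OF assms])
      finally show "inf (sup x (dm_principal (c r))) (dm_principal r) \<le> dm_principal u"
        by simp
    qed
  qed
  have "dm.orthomodular_at (dm_orth c (dm_principal (c p)))"
    unfolding dm.orthomodular_at_orth_iff using below[of _ "c p"] by (simp add: dm_orth_dm_principal)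
  then show ?thesis
    by (simp add: dm_orth_dm_principal)
qed

lemma orthomodular_at_dm:
  assumes "finite (UNIV :: 'a set)" and "pseudo_orthomodular c"
  shows "dm.orthomodular_at x"
proof (rule dm.orthomodular_at_if_atoms)
  show "finite (UNIV :: 'a dm set)"
    using assms(1) by (rule finite_UNIV_dm)
  show "dm.orthomodular_at a" if "atom a" for a
    using atom_is_dm_principal[OF that] orthomodular_at_dm_principal[OF assms(2)] by blast
qed

end

lemma partial_order_DM: "partial_order DM"
  by unfold_locales (auto simp: DM_def)

lemma carrier_DM: "carrier DM = range Rep_dm"
  by (simp add: DM_def type_definition.Rep_range[OF type_definition_dm])

lemma DM_le_Rep_dm: "Rep_dm x \<sqsubseteq>\<^bsub>DM\<^esub> Rep_dm y \<longleftrightarrow> x \<le> y"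
  by (simp add: DM_def less_eq_dm_def)

lemma DM_least_Upper:
  assumes "A \<subseteq> DM_set"
  shows "least DM (Lb (Ub (\<Union>A))) (Upper DM A)"
proof -
  have "Lb (Ub (\<Union>A)) \<subseteq> X" if "X \<in> Upper DM A" for X
    using assms that by (intro Lb_Ub_least) (auto simp: Upper_def DM_def)
  then show ?thesis
    using assms subset_Lb_Ub[of "\<Union>A"] Lb_in_DM_set[of "Ub (\<Union>A)"]
    by (auto simp: least_def Upper_def DM_def)
qed

lemma DM_greatest_Lower:
  assumes "A \<subseteq> DM_set"
  shows "greatest DM (\<Inter>A) (Lower DM A)"
  using assms Inter_in_DM_set[OF assms] by (auto simp: greatest_def Lower_def DM_def)

lemma complete_lattice_DM: "complete_lattice DM"
  using DM_least_Upper DM_greatest_Lower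
  by (intro partial_order.complete_latticeI[OF partial_order_DM]) (auto simp: DM_def)

lemma bounded_lattice_DM: "bounded_lattice DM"
proof -
  interpret complete_lattice DM
    by (rule complete_lattice_DM)
  show ?thesis
    by (simp add: bounded_lattice_def weak_partial_order_bottom_def weak_partial_order_top_def
        weak_partial_order_bottom_axioms_def weak_partial_order_top_axioms_def
        complete_lattice_lattice[OF complete_lattice_DM] weak_partial_order_axioms
        bottom_exists top_exists)
qed

lemma DM_join_Rep_dm: "Rep_dm x \<squnion>\<^bsub>DM\<^esub> Rep_dm y = Rep_dm (sup x y)"
proof -
  interpret complete_lattice DM
    by (rule complete_lattice_DM)
  have lub: "least DM (Rep_dm (sup x y)) (Upper DM {Rep_dm x, Rep_dm y})"
    using DM_least_Upper[of "{Rep_dm x, Rep_dm y}"] Rep_dm[of x] Rep_dm[of y]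
    by (simp add: Rep_dm_sup)
  show ?thesis
  proof (rule joinI[where P = "\<lambda>l. l = Rep_dm (sup x y)"])
    show "l = Rep_dm (sup x y)" if "least DM l (Upper DM {Rep_dm x, Rep_dm y})" for l
      using least_unique[OF that lub] .
  qed (simp_all add: carrier_DM)
qed

lemma DM_meet_Rep_dm: "Rep_dm x \<sqinter>\<^bsub>DM\<^esub> Rep_dm y = Rep_dm (inf x y)"
proof -
  interpret complete_lattice DM
    by (rule complete_lattice_DM)
  have glb: "greatest DM (Rep_dm (inf x y)) (Lower DM {Rep_dm x, Rep_dm y})"
    using DM_greatest_Lower[of "{Rep_dm x, Rep_dm y}"] Rep_dm[of x] Rep_dm[of y]
    by (simp add: Rep_dm_inf)
  show ?thesis
  proof (rule meetI[where P = "\<lambda>l. l = Rep_dm (inf x y)"])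
    show "l = Rep_dm (inf x y)" if "greatest DM l (Lower DM {Rep_dm x, Rep_dm y})" for l
      using greatest_unique[OF that glb] .
  qed (simp_all add: carrier_DM)
qed

lemma DM_top_eq: "\<top>\<^bsub>DM\<^esub> = Rep_dm Orderings.top"
proof -
  interpret complete_lattice DM
    by (rule complete_lattice_DM)
  have "greatest DM (Rep_dm Orderings.top) (carrier DM)"
    by (auto simp: greatest_def carrier_DM DM_le_Rep_dm)
  then show ?thesis
    using top_greatest greatest_unique by blast
qed

lemma DM_bottom_eq: "\<bottom>\<^bsub>DM\<^esub> = Rep_dm bot"
proof -
  interpret complete_lattice DM
    by (rule complete_lattice_DM)
  have "least DM (Rep_dm bot) (carrier DM)"
    by (auto simp: least_def carrier_DM DM_le_Rep_dm)
  then show ?thesis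
    using bottom_least least_unique by blast
qed

lemma DM_comp_Rep_dm: "DM_comp c (Rep_dm x) = Rep_dm (dm_orth c x)"
  by (simp add: DM_comp_def Rep_dm_orth)

lemma ball_carrier_DM: "(\<forall>X\<in>carrier DM. P X) \<longleftrightarrow> (\<forall>x. P (Rep_dm x))"
  by (simp add: carrier_DM)

lemma Rep_dm_in_carrier_DM: "Rep_dm x \<in> carrier DM"
  by (simp add: carrier_DM)

lemmas DM_Rep_dm_simps =
  ball_carrier_DM Rep_dm_in_carrier_DM DM_join_Rep_dm DM_meet_Rep_dm DM_top_eq DM_bottom_eq
  DM_le_Rep_dm DM_comp_Rep_dm

lemma lattice_with_complementation_DM:
  fixes c :: "'a::{order_bot,order_top} \<Rightarrow> 'a"
  assumes "poset_with_complementation c"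
  shows "lattice_with_complementation DM (DM_comp c)"
proof -
  interpret dm: ortholattice "dm_orth c"
    by (rule ortholattice_dm_orth[OF assms])
  show ?thesis
    unfolding lattice_with_complementation_def
    by (simp add: bounded_lattice_DM DM_Rep_dm_simps Rep_dm_inject dm.orth_antimono)
qed

lemma orthomodular_lattice_DM:
  fixes c :: "'a::{order_bot,order_top} \<Rightarrow> 'a"
  assumes "poset_with_complementation c" and "finite (UNIV :: 'a set)" and "pseudo_orthomodular c"
  shows "orthomodular_lattice DM (DM_comp c)"
proof -
  interpret dm: ortholattice "dm_orth c"
    by (rule ortholattice_dm_orth[OF assms(1)])
  show ?thesis
    unfolding orthomodular_lattice_def
    using lattice_with_complementation_DM[OF assms(1)] orthomodular_at_dm[OF assms]
    by (simp add: DM_Rep_dm_simps Rep_dm_inject flip: dm.orthomodular_law)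
qed

lemma left_residuated_DM:
  fixes c :: "'a::{order_bot,order_top} \<Rightarrow> 'a"
  assumes "poset_with_complementation c" and "finite (UNIV :: 'a set)" and "pseudo_orthomodular c"
  shows "left_residuated DM (DM_odot c) (DM_arrow c)"
proof -
  interpret dm: ortholattice "dm_orth c"
    by (rule ortholattice_dm_orth[OF assms(1)])
  show ?thesis
    unfolding left_residuated_def DM_odot_def DM_arrow_def
    using orthomodular_at_dm[OF assms]
    by (simp add: complete_lattice_lattice[OF complete_lattice_DM] DM_Rep_dm_simps Rep_dm_inject
        dm.residuation)
qed

theorem corollary4:
  fixes c :: "'a::{finite,order_bot,order_top} \<Rightarrow> 'a"
  assumes "poset_with_complementation c"
    and "pseudo_orthomodular c"
  shows "complete_lattice (DM :: 'a set gorder)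
    \<and> orthomodular_lattice (DM :: 'a set gorder) (DM_comp c)
    \<and> left_residuated (DM :: 'a set gorder) (DM_odot c) (DM_arrow c)"
  using complete_lattice_DM orthomodular_lattice_DM[OF assms(1) finite_UNIV assms(2)]
    left_residuated_DM[OF assms(1) finite_UNIV assms(2)]
  by blast

end
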